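(* Let $C$ be an $A$-code of length $2$. Then $C$ is self-dual ($C=C^\perp$) if and only if either its canonical generator matrix is $(1\ \ g_2)$ with $g_2^2=-1$ in $A$, or its canonical generator matrix is $\begin{pmatrix}g_1&g_2\\0&g_3\end{pmatrix}$ (with $g_1,g_3$ nonzero monic divisors of $f$, $g_3\mid (f/g_1)g_2$, $\deg g_2<\deg g_3$) and there exist $g',f',r\in\mathbb{F}[x]$ with $g'^2=rf'-1$, $f=g_1^2f'$, $g_3=g_1f'$ and $g_2=g_1g'$.
   Context: Let $\mathbb{F}$ be a finite field, $f(x)\in\mathbb{F}[x]$ monic of degree $m$, $A=\mathbb{F}[x]/\langle f(x)\rangle$, elements identified with polynomials of degree $<m$. An $A$-code of length $l$ is an $A$-submodule of $A^l$; $C^\perp=\{a\in A^l:\sum_ia_ic_i=0\ \forall c\in C\}$. The canonical generator matrix (CGM) of a nonzero $A$-code $C$ is the unique matrix over $A$ whose rows generate $C$, are monic with strictly increasing leading indices (position of first nonzero entry), have leading entries dividing $f$, satisfy that $(f/L_i)\cdot(\text{row }i)$ is an $A$-combination of later rows ($L_i$ the leading entry of row $i$), and such that every entry above a leading entry has smaller degree than it. *)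

theory Defs
  imports "HOL-Computational_Algebra.Polynomial"
begin

text \<open>The ring A = F[x]/<f> is represented by the polynomials p with p mod f = p
  (i.e. degree p < degree f); arithmetic in A is polynomial arithmetic followed by mod f.\<close>

definition in_A :: "'a::field poly \<Rightarrow> 'a poly \<Rightarrow> bool" where
  "in_A f p \<longleftrightarrow> p mod f = p"

definition Avec :: "'a::field poly \<Rightarrow> nat \<Rightarrow> 'a poly list set" where
  "Avec f l = {v. length v = l \<and> (\<forall>x\<in>set v. in_A f x)}"

definition vadd :: "'a::field poly \<Rightarrow> 'a poly list \<Rightarrow> 'a poly list \<Rightarrow> 'a poly list" where
  "vadd f u v = map2 (\<lambda>x y. (x + y) mod f) u v"

definition smul :: "'a::field poly \<Rightarrow> 'a poly \<Rightarrow> 'a poly list \<Rightarrow> 'a poly list" where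
  "smul f a v = map (\<lambda>x. (a * x) mod f) v"

definition is_code :: "'a::field poly \<Rightarrow> nat \<Rightarrow> 'a poly list set \<Rightarrow> bool" where
  "is_code f l C \<longleftrightarrow> C \<subseteq> Avec f l \<and> replicate l 0 \<in> C \<and>
     (\<forall>u\<in>C. \<forall>v\<in>C. vadd f u v \<in> C) \<and>
     (\<forall>a. in_A f a \<longrightarrow> (\<forall>v\<in>C. smul f a v \<in> C))"

definition dual :: "'a::field poly \<Rightarrow> nat \<Rightarrow> 'a poly list set \<Rightarrow> 'a poly list set" where
  "dual f l C = {a \<in> Avec f l. \<forall>c\<in>C. (\<Sum>i<l. a ! i * c ! i) mod f = 0}"

definition lin_comb :: "'a::field poly \<Rightarrow> nat \<Rightarrow> 'a poly list list \<Rightarrow> (nat \<Rightarrow> 'a poly) \<Rightarrow> 'a poly list" where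
  "lin_comb f l rs c = map (\<lambda>i. (\<Sum>j<length rs. c j * rs ! j ! i) mod f) [0..<l]"

definition span :: "'a::field poly \<Rightarrow> nat \<Rightarrow> 'a poly list list \<Rightarrow> 'a poly list set" where
  "span f l rs = {lin_comb f l rs c | c. \<forall>j. in_A f (c j)}"

definition lidx :: "'a::zero list \<Rightarrow> nat" where
  "lidx v = (LEAST i. i < length v \<and> v ! i \<noteq> 0)"

definition lent :: "'a::zero list \<Rightarrow> 'a" where
  "lent v = v ! lidx v"

text \<open>G is the canonical generator matrix of the A-code C of length l.
  (Degree of the zero polynomial is treated as -infinity.)\<close>
definition is_CGM :: "'a::field poly \<Rightarrow> nat \<Rightarrow> 'a poly list set \<Rightarrow> 'a poly list list \<Rightarrow> bool" where
  "is_CGM f l C G \<longleftrightarrow>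
     G \<noteq> [] \<and> (\<forall>r\<in>set G. r \<in> Avec f l \<and> (\<exists>i<l. r ! i \<noteq> 0)) \<and>
     span f l G = C \<and>
     (\<forall>i j. i < j \<and> j < length G \<longrightarrow> lidx (G ! i) < lidx (G ! j)) \<and>
     (\<forall>r\<in>set G. lead_coeff (lent r) = 1 \<and> lent r dvd f) \<and>
     (\<forall>i<length G. smul f (f div lent (G ! i)) (G ! i) \<in> span f l (drop (Suc i) G)) \<and>
     (\<forall>i j. j < i \<and> i < length G \<longrightarrow>
        G ! j ! lidx (G ! i) = 0 \<or> degree (G ! j ! lidx (G ! i)) < degree (lent (G ! i)))"

end

theory Submission
  imports Defs
begin

text \<open>The first entries of the codewords
  form an ideal of F[x] containing f, generated by a monic divisor g1 of f; it is a proper divisor,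
  since otherwise (1, 0) would be a codeword. If g1 = 1 the code is generated by a single row (1, g2)
  and its self-orthogonality reads g2^2 = -1 in A. Otherwise, writing f = g1 h, the vector (h, 0)
  is orthogonal to C, hence a codeword, so g1 divides h and f = g1^2 f'. Self-orthogonality of
  (g1, g2) forces g1 to divide g2 and f' to divide 1 + (g2/g1)^2, and (0, g1 f') generates the
  codewords with vanishing first entry; reducing g2/g1 modulo f' yields the canonical form.
  Conversely the stated conditions make the rows of the generator matrix pairwise orthogonal, and a
  vector orthogonal to both rows can be written explicitly as a combination of them.\<close>

section \<open>Polynomials over a field\<close>

lemma poly_bezout_exists:
  fixes a b :: "'a::field poly"
  shows "\<exists>d x y. d = x * a + y * b \<and> d dvd a \<and> d dvd b"
proof (induction "if b = 0 then 0 else Suc (degree b)" arbitrary: a b rule: less_induct)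
  case less
  show ?case
  proof (cases "b = 0")
    case True
    then show ?thesis by (intro exI[of _ a] exI[of _ 1] exI[of _ 0]) auto
  next
    case False
    have "(if a mod b = 0 then 0 else Suc (degree (a mod b))) < (if b = 0 then 0 else Suc (degree b))"
      using False degree_mod_less[OF False, of a] by auto
    from less[OF this] obtain d x y where d: "d = x * b + y * (a mod b)" "d dvd b" "d dvd a mod b"
      by blast
    have "d = y * a + (x - y * (a div b)) * b"
      using d(1) by (simp add: minus_div_mult_eq_mod[symmetric] algebra_simps)
    moreover have "d dvd a" using d(2,3) by (metis dvd_mod_iff)
    ultimately show ?thesis using d(2) by blast
  qed
qed

lemma poly_power2_dvd_power2_imp_dvd:
  fixes a b :: "'a::field poly"
  assumes "a ^ 2 dvd b ^ 2"
  shows "a dvd b"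
proof (cases "a = 0")
  case True
  with assms show ?thesis by simp
next
  case False
  obtain d x y where d: "d = x * a + y * b" "d dvd a" "d dvd b"
    using poly_bezout_exists by blast
  obtain a' b' where a': "a = d * a'" and b': "b = d * b'"
    using d(2,3) by (auto elim!: dvdE)
  have "d \<noteq> 0" using False a' by auto
  have "d * 1 = d * (x * a' + y * b')" using d(1) a' b' by (simp add: algebra_simps)
  then have coprime: "x * a' + y * b' = 1" using \<open>d \<noteq> 0\<close> by simp
  have "d ^ 2 * a' ^ 2 dvd d ^ 2 * b' ^ 2"
    using assms unfolding a' b' by (simp only: power_mult_distrib)
  then have "a' ^ 2 dvd b' ^ 2"
    using \<open>d \<noteq> 0\<close> by simp
  then have "a' dvd b' ^ 2"
    by (rule dvd_trans[rotated]) (simp add: power2_eq_square)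
  \<comment> \<open>Squaring the Bezout identity exhibits 1 as a multiple of a' plus a multiple of b'^2.\<close>
  moreover have "1 = a' * (x ^ 2 * a' + 2 * x * y * b') + y ^ 2 * b' ^ 2"
    using arg_cong[OF coprime, of "\<lambda>t. t ^ 2"] by (simp add: power2_eq_square algebra_simps)
  ultimately have "a' dvd 1"
    by (metis dvd_add dvd_mult dvd_triv_left)
  then show ?thesis unfolding a' b' by (simp add: unit_imp_dvd)
qed

lemma poly_ideal_monic_generator:
  fixes J :: "'a::field poly set"
  assumes lin: "\<And>a b p q. p \<in> J \<Longrightarrow> q \<in> J \<Longrightarrow> a * p + b * q \<in> J"
    and "p0 \<in> J" "p0 \<noteq> 0"
  obtains g where "g \<in> J" "lead_coeff g = 1" "\<And>p. p \<in> J \<Longrightarrow> g dvd p"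
proof -
  define n where "n = (LEAST n. \<exists>p\<in>J. p \<noteq> 0 \<and> degree p = n)"
  have "\<exists>p\<in>J. p \<noteq> 0 \<and> degree p = n"
    unfolding n_def by (rule LeastI[of _ "degree p0"]) (use assms(2,3) in blast)
  then obtain p where p: "p \<in> J" "p \<noteq> 0" "degree p = n" by blast
  have minimal: "n \<le> degree q" if "q \<in> J" "q \<noteq> 0" for q
    unfolding n_def by (rule Least_le) (use that in blast)
  define g where "g = smult (inverse (lead_coeff p)) p"
  have "g \<in> J"
    using lin[OF p(1) p(1), of "[:inverse (lead_coeff p):]" 0] by (simp add: g_def)
  moreover have "lead_coeff g = 1" "g \<noteq> 0" "degree g = n"
    using p by (auto simp: g_def)
  moreover have "g dvd q" if "q \<in> J" for q
  proof (rule ccontr)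
    assume "\<not> g dvd q"
    then have "q mod g \<noteq> 0" by (simp add: dvd_eq_mod_eq_0)
    moreover have "q mod g = 1 * q + - (q div g) * g"
      by (simp add: minus_div_mult_eq_mod[symmetric])
    then have "q mod g \<in> J"
      using lin[OF that \<open>g \<in> J\<close>] by metis
    ultimately show False
      using minimal[of "q mod g"] degree_mod_less'[OF \<open>g \<noteq> 0\<close>, of q] \<open>degree g = n\<close> by linarith
  qed
  ultimately show ?thesis using that by blast
qed

lemma in_A_iff_degree:
  "(f::'a::field poly) \<noteq> 0 \<Longrightarrow> in_A f p \<longleftrightarrow> p = 0 \<or> degree p < degree f"
  unfolding in_A_def using degree_mod_less[of f p] mod_poly_less[of p f] by auto

lemma in_A_mod [simp]: "in_A f (p mod f)"
  by (simp add: in_A_def)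

lemma in_A_0 [simp]: "in_A f 0"
  by (simp add: in_A_def)

lemma in_A_1: "degree f \<ge> 1 \<Longrightarrow> in_A (f::'a::field poly) 1"
  by (simp add: in_A_def mod_poly_less)

lemma in_A_mod_eqI: "in_A f x \<Longrightarrow> f dvd y - x \<Longrightarrow> y mod f = (x::'a::field poly)"
  unfolding in_A_def by (metis mod_eq_dvd_iff)

lemma in_A_dvd_imp_0: "in_A f p \<Longrightarrow> f dvd p \<Longrightarrow> (p::'a::field poly) = 0"
  unfolding in_A_def by (simp add: dvd_eq_mod_eq_0)

lemma mod_lin_comb_mod:
  fixes f :: "'a::euclidean_semiring_cancel"
  shows "(a * (p mod f) + b * (q mod f)) mod f = (a * p + b * q) mod f"
proof -
  have "(a * (p mod f) + b * (q mod f)) mod f = ((a * (p mod f)) mod f + (b * (q mod f)) mod f) mod f"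
    by (rule mod_add_eq[symmetric])
  also have "\<dots> = ((a * p) mod f + (b * q) mod f) mod f" by (simp only: mod_mult_right_eq)
  also have "\<dots> = (a * p + b * q) mod f" by (rule mod_add_eq)
  finally show ?thesis .
qed

lemma mod_inner_mod:
  fixes f :: "'a::euclidean_semiring_cancel"
  shows "((a mod f) * (b mod f) + (c mod f) * (d mod f)) mod f = (a * b + c * d) mod f"
proof -
  have "((a mod f) * (b mod f) + (c mod f) * (d mod f)) mod f
      = (((a mod f) * (b mod f)) mod f + ((c mod f) * (d mod f)) mod f) mod f"
    by (rule mod_add_eq[symmetric])
  also have "\<dots> = ((a * b) mod f + (c * d) mod f) mod f" by (simp only: mod_mult_eq)
  also have "\<dots> = (a * b + c * d) mod f" by (rule mod_add_eq)
  finally show ?thesis .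
qed

lemma Avec_2_iff: "v \<in> Avec f 2 \<longleftrightarrow> (\<exists>a b. v = [a, b] \<and> in_A f a \<and> in_A f b)"
proof
  assume "v \<in> Avec f 2"
  then have "length v = 2" "\<forall>x\<in>set v. in_A f x" by (auto simp: Avec_def)
  then show "\<exists>a b. v = [a, b] \<and> in_A f a \<and> in_A f b"
    by (cases v; cases "tl v") auto
qed (auto simp: Avec_def)

lemma vadd_2 [simp]: "vadd f [a, b] [c, d] = [(a + c) mod f, (b + d) mod f]"
  by (simp add: vadd_def)

lemma smul_2 [simp]: "smul f k [a, b] = [(k * a) mod f, (k * b) mod f]"
  by (simp add: smul_def)

lemma dual_2_iff:
  "v \<in> dual f 2 C \<longleftrightarrow>
    (\<exists>a b. v = [a, b] \<and> in_A f a \<and> in_A f b \<and> (\<forall>c\<in>C. f dvd a * c ! 0 + b * c ! 1))"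
proof -
  have "(\<Sum>i<2. a ! i * c ! i) = a ! 0 * c ! 0 + a ! 1 * c ! 1" for a c :: "'a poly list"
    by (simp add: numeral_2_eq_2)
  then show ?thesis
    unfolding dual_def Avec_2_iff by (auto simp: dvd_eq_mod_eq_0)
qed

lemma span_Nil_2: "span f 2 [] = {[0, 0]}"
  by (auto simp: span_def lin_comb_def numeral_2_eq_2 upt_rec intro!: exI[of _ "\<lambda>_. 0"])

lemma span_single_2: "span f 2 [[a, b]] = {[(k * a) mod f, (k * b) mod f] | k. True}"
proof -
  have comb: "lin_comb f 2 [[a, b]] c = [(c 0 * a) mod f, (c 0 * b) mod f]" for c
    by (simp add: lin_comb_def numeral_2_eq_2 upt_rec)
  have "[(k * a) mod f, (k * b) mod f] = lin_comb f 2 [[a, b]] (\<lambda>_. k mod f)" for k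
    unfolding comb by (simp add: mod_mult_left_eq)
  then show ?thesis
    unfolding span_def comb by fastforce
qed

lemma span_pair_2:
  "span f 2 [[a, b], [c, d]] = {[(k * a + l * c) mod f, (k * b + l * d) mod f] | k l. True}"
proof -
  have comb: "lin_comb f 2 [[a, b], [c, d]] e
      = [(e 0 * a + e 1 * c) mod f, (e 0 * b + e 1 * d) mod f]" for e
    by (simp add: lin_comb_def numeral_2_eq_2 upt_rec)
  have "[(k * a + l * c) mod f, (k * b + l * d) mod f]
      = lin_comb f 2 [[a, b], [c, d]] (\<lambda>j. if j = 0 then k mod f else l mod f)" for k l
    unfolding comb using mod_lin_comb_mod[of a k f c l] mod_lin_comb_mod[of b k f d l]
    by (simp add: mult.commute)
  then show ?thesis
    unfolding span_def comb by fastforce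
qed

lemma lidx_2_first: "a \<noteq> 0 \<Longrightarrow> lidx [a, b] = 0"
  unfolding lidx_def by (rule Least_equality) auto

lemma lidx_2_second: "b \<noteq> 0 \<Longrightarrow> lidx [0, b] = 1"
  unfolding lidx_def by (rule Least_equality) (auto simp: less_Suc_eq_0_disj)

lemma is_CGM_single_rowI:
  assumes "degree f \<ge> 1" "in_A f b" "span f 2 [[1, b]] = C"
  shows "is_CGM f 2 C [[1, b]]"
proof -
  have lead: "lidx [1, b] = 0" by (rule lidx_2_first) simp
  have "smul f (f div lent [1, b]) [1, b] \<in> span f 2 []"
    by (simp add: lent_def lead span_Nil_2)
  moreover have "\<exists>i<2. [1, b] ! i \<noteq> 0" by (intro exI[of _ 0]) simp
  ultimately show ?thesis
    using assms in_A_1[OF assms(1)] unfolding is_CGM_def by (auto simp: Avec_def lent_def lead)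
qed

lemma is_CGM_pair_rowsI:
  assumes "in_A f a" "in_A f b" "in_A f d" "a \<noteq> 0" "d \<noteq> 0"
    and "lead_coeff a = 1" "a dvd f" "lead_coeff d = 1" "d dvd f"
    and "d dvd (f div a) * b" "b = 0 \<or> degree b < degree d"
    and "span f 2 [[a, b], [0, d]] = C"
  shows "is_CGM f 2 C [[a, b], [0, d]]"
proof -
  have lead: "lidx [a, b] = 0" "lidx [0, d] = 1"
    using assms(4,5) by (simp_all add: lidx_2_first lidx_2_second)
  then have lent: "lent [a, b] = a" "lent [0, d] = d" by (simp_all add: lent_def)
  obtain k where "(f div a) * b = d * k" using assms(10) by (rule dvdE)
  then have "smul f (f div a) [a, b] = [(k * 0) mod f, (k * d) mod f]"
    using assms(7) by (simp add: mult.commute)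
  then have first: "smul f (f div a) [a, b] \<in> span f 2 [[0, d]]"
    unfolding span_single_2 by blast
  have second: "smul f (f div d) [0, d] \<in> span f 2 []"
    using assms(9) by (simp add: span_Nil_2)
  have "\<forall>i<length [[a, b], [0, d]]. smul f (f div lent ([[a, b], [0, d]] ! i)) ([[a, b], [0, d]] ! i)
      \<in> span f 2 (drop (Suc i) [[a, b], [0, d]])"
    using first second by (auto simp: lent less_Suc_eq)
  moreover have "\<forall>i j. i < j \<and> j < length [[a, b], [0, d]] \<longrightarrow>
      lidx ([[a, b], [0, d]] ! i) < lidx ([[a, b], [0, d]] ! j)"
    using lead by (auto simp: less_Suc_eq)
  moreover have "\<forall>i j. j < i \<and> i < length [[a, b], [0, d]] \<longrightarrow>
      [[a, b], [0, d]] ! j ! lidx ([[a, b], [0, d]] ! i) = 0 \<or>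
      degree ([[a, b], [0, d]] ! j ! lidx ([[a, b], [0, d]] ! i)) < degree (lent ([[a, b], [0, d]] ! i))"
    using lead lent assms(11) by (auto simp: less_Suc_eq)
  moreover have "\<forall>r\<in>set [[a, b], [0, d]]. r \<in> Avec f 2 \<and> (\<exists>i<2. r ! i \<noteq> 0)"
    using assms(1-5) by (auto simp: Avec_def intro: exI[of _ 0] exI[of _ 1])
  ultimately show ?thesis
    using lent assms(6-9,12) unfolding is_CGM_def by simp
qed

lemma is_CGM_span: "is_CGM f l C G \<Longrightarrow> span f l G = C"
  by (simp add: is_CGM_def)

lemma is_CGM_entries_in_A: "is_CGM f l C G \<Longrightarrow> r \<in> set G \<Longrightarrow> x \<in> set r \<Longrightarrow> in_A f x"
  by (auto simp: is_CGM_def Avec_def)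

section \<open>Codes of length 2\<close>

locale code2 =
  fixes f :: "'a::field poly" and C :: "'a poly list set"
  assumes code: "is_code f 2 C"
begin

lemma codeword_cases: "v \<in> C \<Longrightarrow> \<exists>a b. v = [a, b] \<and> in_A f a \<and> in_A f b"
  using code by (auto simp: is_code_def Avec_2_iff)

lemma codeword_entries_in_A: "[a, b] \<in> C \<Longrightarrow> in_A f a \<and> in_A f b"
  using codeword_cases by blast

lemma zero_codeword: "[0, 0] \<in> C"
  using code by (simp add: is_code_def numeral_2_eq_2)

lemma lin_comb_codeword:
  assumes "[u0, u1] \<in> C" "[v0, v1] \<in> C"
  shows "[(a * u0 + b * v0) mod f, (a * u1 + b * v1) mod f] \<in> C"
proof -
  have "smul f (a mod f) [u0, u1] \<in> C" "smul f (b mod f) [v0, v1] \<in> C"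
    using code assms in_A_mod unfolding is_code_def by blast+
  then have "vadd f (smul f (a mod f) [u0, u1]) (smul f (b mod f) [v0, v1]) \<in> C"
    using code unfolding is_code_def by blast
  then show ?thesis
    using mod_lin_comb_mod[of u0 a f v0 b] mod_lin_comb_mod[of u1 a f v1 b]
    by (simp add: mod_add_eq mult.commute)
qed

lemma span_single_row_eq:
  assumes row: "[1, b] \<in> C" and kernel: "\<And>k. [0, k] \<in> C \<Longrightarrow> k = 0"
  shows "span f 2 [[1, b]] = C"
proof (intro equalityI subsetI)
  fix v assume "v \<in> span f 2 [[1, b]]"
  then show "v \<in> C"
    unfolding span_single_2 using lin_comb_codeword[OF row zero_codeword, of _ 0] by auto
next
  fix v assume "v \<in> C"
  then obtain v0 v1 where v: "v = [v0, v1]" "in_A f v0" "in_A f v1"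
    using codeword_cases by blast
  have "[(1 * v0 + (- v0) * 1) mod f, (1 * v1 + (- v0) * b) mod f] \<in> C"
    using lin_comb_codeword[OF \<open>v \<in> C\<close>[unfolded v(1)] row] .
  then have "(v1 - v0 * b) mod f = 0" using kernel by simp
  then have "f dvd v0 * b - v1" by (subst dvd_diff_commute) (simp add: dvd_eq_mod_eq_0)
  then have "(v0 * b) mod f = v1" by (rule in_A_mod_eqI[OF v(3)])
  moreover have "(v0 * 1) mod f = v0" using v(2) by (simp add: in_A_def)
  ultimately show "v \<in> span f 2 [[1, b]]"
    unfolding span_single_2 v(1) by force
qed

lemma span_pair_rows_eq:
  assumes row1: "[a, b] \<in> C" and row2: "[0, d] \<in> C" and "d dvd f"
    and first: "\<And>v0 v1. [v0, v1] \<in> C \<Longrightarrow> a dvd v0"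
    and kernel: "\<And>k. [0, k] \<in> C \<Longrightarrow> d dvd k"
  shows "span f 2 [[a, b], [0, d]] = C"
proof (intro equalityI subsetI)
  fix v assume "v \<in> span f 2 [[a, b], [0, d]]"
  then show "v \<in> C"
    unfolding span_pair_2 using lin_comb_codeword[OF row1 row2] by auto
next
  fix v assume "v \<in> C"
  then obtain v0 v1 where v: "v = [v0, v1]" "in_A f v0" "in_A f v1"
    using codeword_cases by blast
  obtain k where k: "v0 = a * k" using first \<open>v \<in> C\<close> v(1) by (blast elim: dvdE)
  have "[(1 * v0 + (- k) * a) mod f, (1 * v1 + (- k) * b) mod f] \<in> C"
    using lin_comb_codeword[OF \<open>v \<in> C\<close>[unfolded v(1)] row1] .
  then have "[0, (v1 - k * b) mod f] \<in> C" using k by (simp add: algebra_simps)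
  then have "d dvd (v1 - k * b) mod f" by (rule kernel)
  then have "d dvd v1 - k * b" using \<open>d dvd f\<close> by (simp add: dvd_mod_iff)
  then obtain l where l: "v1 - k * b = d * l" by (rule dvdE)
  have "(k * a + l * 0) mod f = v0" using v(2) k by (simp add: in_A_def mult.commute)
  moreover have "(k * b + l * d) mod f = v1"
    using v(3) l by (simp add: in_A_def algebra_simps)
  ultimately show "v \<in> span f 2 [[a, b], [0, d]]"
    unfolding span_pair_2 v(1) by blast
qed

lemma first_column_generator:
  assumes "f \<noteq> 0"
  obtains g b where "[g mod f, b] \<in> C" "lead_coeff g = 1" "g dvd f"
    "\<And>v0 v1. [v0, v1] \<in> C \<Longrightarrow> g dvd v0"
proof -
  define J where "J = {p. \<exists>b. [p mod f, b] \<in> C}"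
  have "a * p + b * q \<in> J" if pq: "p \<in> J" "q \<in> J" for a b p q
  proof -
    obtain u v where "[p mod f, u] \<in> C" "[q mod f, v] \<in> C"
      using pq unfolding J_def by blast
    from lin_comb_codeword[OF this, of a b] show ?thesis
      unfolding J_def mod_lin_comb_mod by blast
  qed
  moreover have "f \<in> J" using zero_codeword unfolding J_def by auto
  ultimately obtain g where g: "g \<in> J" "lead_coeff g = 1" "\<And>p. p \<in> J \<Longrightarrow> g dvd p"
    using poly_ideal_monic_generator assms by metis
  have "v0 \<in> J" if "[v0, v1] \<in> C" for v0 v1
    using that codeword_entries_in_A[OF that] unfolding J_def in_A_def by auto
  with g \<open>f \<in> J\<close> that show ?thesis unfolding J_def by blast
qed

end

section \<open>Self-dual codes of length 2\<close>

definition single_row_self_dual_CGM :: "'a::field poly \<Rightarrow> 'a poly list set \<Rightarrow> bool" where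
  "single_row_self_dual_CGM f C \<longleftrightarrow>
    (\<exists>g2. is_CGM f 2 C [[1, g2]] \<and> (g2 ^ 2) mod f = (-1) mod f)"

definition two_row_self_dual_CGM :: "'a::field poly \<Rightarrow> 'a poly list set \<Rightarrow> bool" where
  "two_row_self_dual_CGM f C \<longleftrightarrow>
    (\<exists>g1 g2 g3. is_CGM f 2 C [[g1, g2], [0, g3]] \<and>
        g1 \<noteq> 0 \<and> g3 \<noteq> 0 \<and> lead_coeff g1 = 1 \<and> lead_coeff g3 = 1 \<and>
        g1 dvd f \<and> g3 dvd f \<and> g3 dvd (f div g1) * g2 \<and>
        (g2 = 0 \<or> degree g2 < degree g3) \<and>
        (\<exists>g' f' r. g' ^ 2 = r * f' - 1 \<and> f = g1 ^ 2 * f' \<and> g3 = g1 * f' \<and> g2 = g1 * g'))"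

locale self_dual_code2 = code2 +
  assumes monic: "lead_coeff f = 1" and nonconstant: "degree f \<ge> 1" and self_dual: "C = dual f 2 C"
begin

lemma modulus_nonzero: "f \<noteq> 0"
  using nonconstant by auto

lemma codewords_orthogonal:
  assumes "[u0, u1] \<in> C" "[v0, v1] \<in> C"
  shows "f dvd u0 * v0 + u1 * v1"
proof -
  have "[u0, u1] \<in> dual f 2 C" using assms(1) self_dual by simp
  then show ?thesis using assms(2) unfolding dual_2_iff by force
qed

lemma codeword_if_orthogonal:
  assumes "in_A f a" "in_A f b" "\<And>v0 v1. [v0, v1] \<in> C \<Longrightarrow> f dvd a * v0 + b * v1"
  shows "[a, b] \<in> C"
proof -
  have "f dvd a * c ! 0 + b * c ! 1" if "c \<in> C" for c
    using codeword_cases[OF that] assms(3) that by auto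
  then have "[a, b] \<in> dual f 2 C" using assms(1,2) unfolding dual_2_iff by blast
  then show ?thesis using self_dual by simp
qed

lemma leading_row:
  obtains g1 g2 where "[g1, g2] \<in> C" "lead_coeff g1 = 1" "g1 dvd f"
    "\<And>v0 v1. [v0, v1] \<in> C \<Longrightarrow> g1 dvd v0"
proof -
  obtain g b where g: "[g mod f, b] \<in> C" "lead_coeff g = 1" "g dvd f"
    and first: "\<And>v0 v1. [v0, v1] \<in> C \<Longrightarrow> g dvd v0"
    using first_column_generator modulus_nonzero by metis
  have "degree g < degree f"
  proof (rule ccontr)
    assume "\<not> degree g < degree f"
    then have zero: "v0 = 0" if "[v0, v1] \<in> C" for v0 v1
      using codeword_entries_in_A[OF that] first[OF that] modulus_nonzero
      by (metis dvd_imp_degree_le in_A_iff_degree leD le_less_trans)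
    then have "[1, 0] \<in> C"
      using codeword_if_orthogonal[OF in_A_1[OF nonconstant] in_A_0] by force
    then show False using zero[of 1 0] by simp
  qed
  then have "g mod f = g" by (simp add: mod_poly_less)
  with g first that show ?thesis by simp
qed

lemma unit_leading_row_CGM:
  assumes row: "[1, b] \<in> C"
  shows "is_CGM f 2 C [[1, b]]" and "b ^ 2 mod f = (-1) mod f"
proof -
  have norm: "f dvd 1 + b * b" using codewords_orthogonal[OF row row] by simp
  have "k = 0" if "[0, k] \<in> C" for k
  proof -
    have "f dvd k * b" using codewords_orthogonal[OF that row] by simp
    moreover have "f dvd k * (1 + b * b)" using norm by (rule dvd_mult)
    ultimately have "f dvd k * (1 + b * b) - (k * b) * b" by (simp add: dvd_diff dvd_mult2)
    then have "f dvd k" by (simp add: algebra_simps)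
    then show ?thesis using codeword_entries_in_A[OF that] in_A_dvd_imp_0 by blast
  qed
  then show "is_CGM f 2 C [[1, b]]"
    using is_CGM_single_rowI[OF nonconstant] span_single_row_eq[OF row] codeword_entries_in_A[OF row]
    by blast
  show "b ^ 2 mod f = (-1) mod f"
    using norm unfolding mod_eq_dvd_iff by (simp add: power2_eq_square add.commute)
qed

context
  fixes g1 g2
  assumes lead_row: "[g1, g2] \<in> C" and lead_monic: "lead_coeff g1 = 1"
    and lead_dvd: "g1 dvd f" and lead_dvd_first: "\<And>v0 v1. [v0, v1] \<in> C \<Longrightarrow> g1 dvd v0"
    and lead_nonconstant: "degree g1 > 0"
begin

lemma lead_nonzero: "g1 \<noteq> 0"
  using lead_monic by auto

lemma cofactor_in_A: "in_A f (f div g1)"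
proof -
  have "degree f = degree g1 + degree (f div g1)"
    using lead_dvd lead_nonzero modulus_nonzero by (metis degree_mult_eq dvd_mult_div_cancel mult_eq_0_iff)
  then show ?thesis using lead_nonconstant modulus_nonzero by (simp add: in_A_iff_degree)
qed

lemma lead_square_dvd: "g1 ^ 2 dvd f"
proof -
  have "[f div g1, 0] \<in> C"
  proof (rule codeword_if_orthogonal[OF cofactor_in_A in_A_0])
    fix v0 v1 assume "[v0, v1] \<in> C"
    then obtain a where "v0 = g1 * a" using lead_dvd_first by (blast elim: dvdE)
    then have "f div g1 * v0 + 0 * v1 = f * a"
      using lead_dvd by (metis add_0_right dvd_div_mult_self mult.assoc mult_zero_left)
    then show "f dvd f div g1 * v0 + 0 * v1" by simp
  qed
  then have "g1 dvd f div g1" using lead_dvd_first by blast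
  then show ?thesis
    using lead_dvd by (metis dvd_div_iff_mult lead_nonzero power2_eq_square)
qed

lemma lead_row_factorization:
  obtains f' g0 where "f = g1 ^ 2 * f'" "g2 = g1 * g0" "f' dvd 1 + g0 ^ 2"
proof -
  obtain f' where f': "f = g1 ^ 2 * f'" using lead_square_dvd by (rule dvdE)
  have norm: "f dvd g1 * g1 + g2 * g2" using codewords_orthogonal[OF lead_row lead_row] .
  with lead_square_dvd have "g1 ^ 2 dvd g1 * g1 + g2 * g2" by (rule dvd_trans)
  then have "g1 ^ 2 dvd g1 ^ 2 + g2 ^ 2" by (simp add: power2_eq_square)
  then have "g1 ^ 2 dvd g2 ^ 2" by (simp add: dvd_add_right_iff)
  then obtain g0 where g0: "g2 = g1 * g0"
    using poly_power2_dvd_power2_imp_dvd by (blast elim: dvdE)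
  have "g1 ^ 2 * f' dvd g1 ^ 2 * (1 + g0 ^ 2)"
    using norm unfolding f' g0 by (simp add: power2_eq_square algebra_simps)
  then have "f' dvd 1 + g0 ^ 2" using lead_nonzero by simp
  with f' g0 that show ?thesis by blast
qed

lemma lead_dvd_kernel:
  assumes "[0, k] \<in> C"
  shows "g1 dvd k"
proof -
  have "f dvd k ^ 2" using codewords_orthogonal[OF assms assms] by (simp add: power2_eq_square)
  with lead_square_dvd have "g1 ^ 2 dvd k ^ 2" by (rule dvd_trans)
  then show ?thesis by (rule poly_power2_dvd_power2_imp_dvd)
qed

lemma lead_dvd_second:
  assumes "[v0, v1] \<in> C"
  shows "g1 dvd v1"
proof -
  obtain g0 where g0: "g2 = g1 * g0" by (rule lead_row_factorization)
  obtain a where a: "v0 = g1 * a" using lead_dvd_first[OF assms] by (rule dvdE)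
  have "[(1 * v0 + (- a) * g1) mod f, (1 * v1 + (- a) * g2) mod f] \<in> C"
    using lin_comb_codeword[OF assms lead_row] .
  then have "[0, (v1 - a * g2) mod f] \<in> C" using a by (simp add: algebra_simps)
  then have "g1 dvd (v1 - a * g2) mod f" by (rule lead_dvd_kernel)
  then have "g1 dvd v1 - a * g2" using lead_dvd by (simp add: dvd_mod_iff)
  moreover have "g1 dvd a * g2" unfolding g0 by simp
  ultimately have "g1 dvd (v1 - a * g2) + a * g2" by (rule dvd_add)
  then show ?thesis by simp
qed

lemma kernel_row: "[0, f div g1] \<in> C"
proof (rule codeword_if_orthogonal[OF in_A_0 cofactor_in_A])
  fix v0 v1 assume "[v0, v1] \<in> C"
  then obtain b where "v1 = g1 * b" using lead_dvd_second by (blast elim: dvdE)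
  then have "0 * v0 + f div g1 * v1 = f * b"
    using lead_dvd by (simp add: mult.assoc[symmetric])
  then show "f dvd 0 * v0 + f div g1 * v1" by (metis dvd_triv_left)
qed

lemma kernel_dvd:
  assumes "[0, k] \<in> C"
  shows "f div g1 dvd k"
proof -
  obtain f' g0 where f': "f = g1 ^ 2 * f'" and g0: "g2 = g1 * g0" and norm: "f' dvd 1 + g0 ^ 2"
    by (rule lead_row_factorization)
  obtain m where m: "k = g1 * m" using lead_dvd_kernel[OF assms] by (rule dvdE)
  have "f dvd 0 * g1 + k * g2" using codewords_orthogonal[OF assms lead_row] .
  then have "g1 ^ 2 * f' dvd g1 ^ 2 * (m * g0)"
    unfolding f' m g0 by (simp add: power2_eq_square algebra_simps)
  then have "f' dvd m * g0" using lead_nonzero by simp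
  \<comment> \<open>g0 is invertible modulo f', so f' divides m.\<close>
  moreover have "f' dvd m * (1 + g0 ^ 2)" using norm by (rule dvd_mult)
  ultimately have "f' dvd m * (1 + g0 ^ 2) - (m * g0) * g0" by (simp add: dvd_diff dvd_mult2)
  then have "f' dvd m" by (simp add: power2_eq_square algebra_simps)
  moreover have "f div g1 = g1 * f'"
    unfolding f' using lead_nonzero by (simp add: power2_eq_square)
  ultimately show ?thesis unfolding m by simp
qed

lemma reduced_lead_row:
  obtains f' g' r where "f = g1 ^ 2 * f'" "[g1, g1 * g'] \<in> C"
    "g1 * g' = 0 \<or> degree (g1 * g') < degree (g1 * f')" "g' ^ 2 = r * f' - 1"
proof -
  obtain f' g0 where f': "f = g1 ^ 2 * f'" and g0: "g2 = g1 * g0" and norm: "f' dvd 1 + g0 ^ 2"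
    by (rule lead_row_factorization)
  have "f' \<noteq> 0" using f' modulus_nonzero by auto
  have kernel: "f div g1 = g1 * f'" unfolding f' using lead_nonzero by (simp add: power2_eq_square)
  \<comment> \<open>Subtracting a multiple of the kernel row (0, g1 f') reduces g0 modulo f'.\<close>
  define g' where "g' = g0 mod f'"
  have g0_split: "g0 = (g0 div f') * f' + g'" unfolding g'_def by simp
  have deg: "g1 * g' = 0 \<or> degree (g1 * g') < degree (g1 * f')"
  proof (cases "g' = 0")
    case False
    then have "degree g' < degree f'"
      using degree_mod_less[OF \<open>f' \<noteq> 0\<close>] unfolding g'_def by blast
    then show ?thesis using False lead_nonzero \<open>f' \<noteq> 0\<close> by (simp add: degree_mult_eq)
  qed simp
  have "g1 * f' = 0 \<or> degree (g1 * f') < degree f"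
    using cofactor_in_A modulus_nonzero kernel by (simp add: in_A_iff_degree)
  with deg have "in_A f (g1 * g')" using modulus_nonzero by (auto simp: in_A_iff_degree)
  moreover have "[(1 * g1 + (- (g0 div f')) * 0) mod f, (1 * g2 + (- (g0 div f')) * (g1 * f')) mod f] \<in> C"
    using lin_comb_codeword[OF lead_row kernel_row[unfolded kernel]] .
  moreover have "1 * g2 + (- (g0 div f')) * (g1 * f') = g1 * g'"
    unfolding g0 by (subst g0_split) (simp add: algebra_simps)
  ultimately have row: "[g1, g1 * g'] \<in> C"
    using codeword_entries_in_A[OF lead_row] by (simp add: in_A_def)
  have "1 + g0 ^ 2 = (g' ^ 2 + 1) + f' * ((g0 div f') ^ 2 * f' + 2 * (g0 div f') * g')"
    by (subst g0_split) (simp add: power2_eq_square algebra_simps)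
  with norm have "f' dvd g' ^ 2 + 1" by (metis dvd_add_left_iff dvd_triv_left)
  then obtain r where "g' ^ 2 + 1 = f' * r" by (rule dvdE)
  then have "g' ^ 2 = r * f' - 1" by (simp add: algebra_simps)
  with f' row deg that show ?thesis by blast
qed

lemma nonunit_leading_row_CGM: "two_row_self_dual_CGM f C"
proof -
  obtain f' g' r where f': "f = g1 ^ 2 * f'" and row: "[g1, g1 * g'] \<in> C"
    and deg: "g1 * g' = 0 \<or> degree (g1 * g') < degree (g1 * f')" and r: "g' ^ 2 = r * f' - 1"
    by (rule reduced_lead_row)
  have kernel: "f div g1 = g1 * f'" unfolding f' using lead_nonzero by (simp add: power2_eq_square)
  have "g1 * f' \<noteq> 0" using f' modulus_nonzero by auto
  have "lead_coeff f = lead_coeff g1 ^ 2 * lead_coeff f'"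
    unfolding f' by (simp add: lead_coeff_mult lead_coeff_power)
  then have kernel_monic: "lead_coeff (g1 * f') = 1" using monic lead_monic by (simp add: lead_coeff_mult)
  have kernel_dvd_modulus: "g1 * f' dvd f" using f' by (simp add: power2_eq_square)
  have span: "span f 2 [[g1, g1 * g'], [0, g1 * f']] = C"
    using span_pair_rows_eq[OF row kernel_row[unfolded kernel] kernel_dvd_modulus lead_dvd_first] kernel_dvd kernel
    by simp
  have "is_CGM f 2 C [[g1, g1 * g'], [0, g1 * f']]"
    using codeword_entries_in_A[OF row] cofactor_in_A kernel
    by (intro is_CGM_pair_rowsI[OF _ _ _ lead_nonzero \<open>g1 * f' \<noteq> 0\<close> lead_monic lead_dvd
          kernel_monic kernel_dvd_modulus _ deg span]) simp_all
  moreover have "g1 * f' dvd (f div g1) * (g1 * g')" unfolding kernel by simp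
  ultimately show ?thesis
    unfolding two_row_self_dual_CGM_def
    using lead_nonzero \<open>g1 * f' \<noteq> 0\<close> lead_monic kernel_monic lead_dvd kernel_dvd_modulus deg r f' by blast
qed

end

lemma self_dual_CGM_form: "single_row_self_dual_CGM f C \<or> two_row_self_dual_CGM f C"
proof -
  obtain g1 g2 where row: "[g1, g2] \<in> C" and monic: "lead_coeff g1 = 1" and "g1 dvd f"
    and first: "\<And>v0 v1. [v0, v1] \<in> C \<Longrightarrow> g1 dvd v0"
    using leading_row by blast
  show ?thesis
  proof (cases "degree g1 = 0")
    case True
    then have "g1 = 1" using monic by (metis degree_0_id one_pCons)
    then show ?thesis
      using unit_leading_row_CGM row unfolding single_row_self_dual_CGM_def by auto
  next
    case False
    then show ?thesis
      using nonunit_leading_row_CGM[OF row monic \<open>g1 dvd f\<close> first] by simp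
  qed
qed

end

section \<open>The canonical forms are self-dual\<close>

lemma span_pair_subset_dual:
  fixes f :: "'a::field poly"
  assumes "f dvd a * a + b * b" "f dvd a * c + b * d" "f dvd c * c + d * d"
  shows "span f 2 [[a, b], [c, d]] \<subseteq> dual f 2 (span f 2 [[a, b], [c, d]])"
proof
  fix u assume "u \<in> span f 2 [[a, b], [c, d]]"
  then obtain k l where u: "u = [(k * a + l * c) mod f, (k * b + l * d) mod f]"
    unfolding span_pair_2 by blast
  have orth: "f dvd (k * a + l * c) mod f * v ! 0 + (k * b + l * d) mod f * v ! 1"
    if vspan: "v \<in> span f 2 [[a, b], [c, d]]" for v
  proof -
    obtain m n where v: "v = [(m * a + n * c) mod f, (m * b + n * d) mod f]"
      using vspan unfolding span_pair_2 by blast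
    have "(k * a + l * c) * (m * a + n * c) + (k * b + l * d) * (m * b + n * d)
        = k * m * (a * a + b * b) + (k * n + l * m) * (a * c + b * d) + l * n * (c * c + d * d)"
      by (simp add: algebra_simps)
    also have "f dvd \<dots>" using assms by (simp add: dvd_add dvd_mult)
    finally have "((k * a + l * c) mod f * ((m * a + n * c) mod f)
        + (k * b + l * d) mod f * ((m * b + n * d) mod f)) mod f = 0"
      unfolding mod_inner_mod by (simp only: dvd_eq_mod_eq_0)
    then show ?thesis unfolding v by (simp add: dvd_eq_mod_eq_0)
  qed
  show "u \<in> dual f 2 (span f 2 [[a, b], [c, d]])"
    unfolding u dual_2_iff using orth in_A_mod by blast
qed

lemma span_single_eq_pair: "span f 2 [[a, b]] = span f 2 [[a, b], [0, 0]]"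
  by (simp add: span_single_2 span_pair_2)

lemma single_row_self_dual:
  assumes "degree f \<ge> 1" "in_A f b" "f dvd b ^ 2 + 1"
  shows "dual f 2 (span f 2 [[1, b]]) = span f 2 [[1, b]]"
proof
  show "span f 2 [[1, b]] \<subseteq> dual f 2 (span f 2 [[1, b]])"
    unfolding span_single_eq_pair using assms(3)
    by (intro span_pair_subset_dual) (simp_all add: power2_eq_square add.commute)
next
  show "dual f 2 (span f 2 [[1, b]]) \<subseteq> span f 2 [[1, b]]"
  proof
    fix v assume "v \<in> dual f 2 (span f 2 [[1, b]])"
    then obtain a0 a1 where v: "v = [a0, a1]" "in_A f a0" "in_A f a1"
      and orth: "\<forall>c\<in>span f 2 [[1, b]]. f dvd a0 * c ! 0 + a1 * c ! 1"
      unfolding dual_2_iff by blast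
    have "[(1 * 1) mod f, (1 * b) mod f] \<in> span f 2 [[1, b]]"
      unfolding span_single_2 by blast
    from orth[rule_format, OF this] have "f dvd a0 * ((1 * 1) mod f) + a1 * ((1 * b) mod f)"
      by simp
    then have "f dvd a0 + a1 * b"
      using in_A_1[OF assms(1)] assms(2) by (simp add: in_A_def)
    \<comment> \<open>Since b^2 = -1, the multiplier of the row (1, b) is -a1 b.\<close>
    moreover have "- (a1 * b) * 1 - a0 = - (a0 + a1 * b)" by simp
    ultimately have "(- (a1 * b) * 1) mod f = a0"
      by (intro in_A_mod_eqI[OF v(2)]) (simp only: dvd_minus_iff)
    moreover have "(- (a1 * b) * b) mod f = a1"
    proof (rule in_A_mod_eqI[OF v(3)])
      have "- (a1 * b) * b - a1 = - (a1 * (b ^ 2 + 1))" by (simp add: power2_eq_square algebra_simps)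
      then show "f dvd - (a1 * b) * b - a1" using assms(3) by simp
    qed
    ultimately have "v = [(- (a1 * b) * 1) mod f, (- (a1 * b) * b) mod f]"
      using v(1) by simp
    then show "v \<in> span f 2 [[1, b]]"
      unfolding span_single_2 by blast
  qed
qed

lemma orthogonal_to_two_rows_in_span:
  assumes "g1 * f' \<noteq> 0" and f: "f = g1 ^ 2 * f'" and r: "g' ^ 2 = r * f' - 1"
    and "in_A f b1" "in_A f b2"
    and orth1: "f dvd b1 * g1 + b2 * (g1 * g')" and orth2: "f dvd b2 * (g1 * f')"
  shows "[b1, b2] \<in> span f 2 [[g1, g1 * g'], [0, g1 * f']]"
proof -
  have "g1 \<noteq> 0" using assms(1) by auto
  have "(g1 * f') * g1 dvd (g1 * f') * b2"
    using orth2 unfolding f by (simp add: power2_eq_square algebra_simps)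
  then have "g1 dvd b2" using assms(1) by simp
  then obtain t where t: "b2 = g1 * t" by (rule dvdE)
  have "g1 * (g1 * f') dvd g1 * (b1 + g1 * t * g')"
    using orth1 unfolding f t by (simp add: power2_eq_square algebra_simps)
  then have orth1': "g1 * f' dvd b1 + g1 * t * g'" using \<open>g1 \<noteq> 0\<close> by simp
  then have "g1 dvd b1 + g1 * t * g'" using dvd_mult_left by blast
  then have "g1 dvd b1" by (simp add: dvd_add_left_iff mult.assoc)
  then obtain s where s: "b1 = g1 * s" by (rule dvdE)
  have "g1 * f' dvd g1 * (s + t * g')" using orth1' unfolding s by (simp add: algebra_simps)
  then have "f' dvd s + t * g'" using \<open>g1 \<noteq> 0\<close> by simp
  then obtain u where u: "s + t * g' = f' * u" by (rule dvdE)
  \<comment> \<open>Solve s g' + l f' = t, using g'^2 + 1 = r f'.\<close>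
  define l where "l = t * r - u * g'"
  have "s * g' + l * f' = (s + t * g') * g' - t * (g' ^ 2 + 1) + t * r * f' - u * g' * f' + t"
    unfolding l_def by (simp add: algebra_simps power2_eq_square)
  also have "\<dots> = t" unfolding u using r by (simp add: algebra_simps)
  finally have "s * g' + l * f' = t" .
  moreover have "s * (g1 * g') + l * (g1 * f') = g1 * (s * g' + l * f')"
    by (simp add: algebra_simps)
  ultimately have "s * (g1 * g') + l * (g1 * f') = b2" unfolding t by simp
  then have "(s * (g1 * g') + l * (g1 * f')) mod f = b2" using assms(5) by (simp add: in_A_def)
  moreover have "(s * g1 + l * 0) mod f = b1" using assms(4) unfolding s in_A_def by (simp add: mult.commute)
  ultimately show ?thesis unfolding span_pair_2 by force
qed

lemma two_row_self_dual:
  assumes "in_A f g1" "in_A f (g1 * g')" "in_A f (g1 * f')" "g1 * f' \<noteq> 0"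
    and f: "f = g1 ^ 2 * f'" and r: "g' ^ 2 = r * f' - 1"
  shows "dual f 2 (span f 2 [[g1, g1 * g'], [0, g1 * f']]) = span f 2 [[g1, g1 * g'], [0, g1 * f']]"
    (is "dual f 2 ?S = ?S")
proof
  have "g1 * g1 + g1 * g' * (g1 * g') = g1 ^ 2 * (g' ^ 2 + 1)"
    by (simp add: power2_eq_square algebra_simps)
  also have "\<dots> = f * r" unfolding f using r by simp
  finally have "g1 * g1 + g1 * g' * (g1 * g') = f * r" .
  moreover have "g1 * 0 + g1 * g' * (g1 * f') = f * g'" and "0 * 0 + g1 * f' * (g1 * f') = f * f'"
    unfolding f by (simp_all add: power2_eq_square algebra_simps)
  ultimately show "?S \<subseteq> dual f 2 ?S"
    by (intro span_pair_subset_dual) (metis dvd_triv_left)+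
next
  show "dual f 2 ?S \<subseteq> ?S"
  proof
    fix v assume "v \<in> dual f 2 ?S"
    then obtain b1 b2 where v: "v = [b1, b2]" "in_A f b1" "in_A f b2"
      and orth: "\<forall>c\<in>?S. f dvd b1 * c ! 0 + b2 * c ! 1"
      unfolding dual_2_iff by blast
    have "[(1 * g1 + 0 * 0) mod f, (1 * (g1 * g') + 0 * (g1 * f')) mod f] \<in> ?S"
      "[(0 * g1 + 1 * 0) mod f, (0 * (g1 * g') + 1 * (g1 * f')) mod f] \<in> ?S"
      unfolding span_pair_2 by blast+
    then have "[g1, g1 * g'] \<in> ?S" "[0, g1 * f'] \<in> ?S"
      using assms(1-3) by (simp_all add: in_A_def)
    then have "f dvd b1 * g1 + b2 * (g1 * g')" "f dvd b2 * (g1 * f')"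
      using orth by force+
    then show "v \<in> ?S"
      unfolding v(1) using orthogonal_to_two_rows_in_span[OF assms(4) f r v(2,3)] by blast
  qed
qed

lemma single_row_CGM_self_dual:
  assumes "degree f \<ge> 1" and "single_row_self_dual_CGM f C"
  shows "C = dual f 2 C"
proof -
  obtain b where cgm: "is_CGM f 2 C [[1, b]]" and "b ^ 2 mod f = (-1) mod f"
    using assms(2) unfolding single_row_self_dual_CGM_def by blast
  then have "f dvd b ^ 2 + 1" unfolding mod_eq_dvd_iff by simp
  with single_row_self_dual[OF assms(1)] is_CGM_entries_in_A[OF cgm] show ?thesis
    using is_CGM_span[OF cgm] by auto
qed

lemma two_row_CGM_self_dual:
  assumes "two_row_self_dual_CGM f C"
  shows "C = dual f 2 C"
proof -
  obtain g1 g' f' r where cgm: "is_CGM f 2 C [[g1, g1 * g'], [0, g1 * f']]"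
    and "g1 * f' \<noteq> 0" "f = g1 ^ 2 * f'" "g' ^ 2 = r * f' - 1"
    using assms unfolding two_row_self_dual_CGM_def by (elim exE conjE) simp
  with two_row_self_dual is_CGM_entries_in_A[OF cgm] show ?thesis
    using is_CGM_span[OF cgm] by (metis list.set_intros)
qed

theorem mainTheorem8:
  fixes f :: "'a::{field,finite} poly" and C :: "'a poly list set"
  assumes "lead_coeff f = 1" and "degree f \<ge> 1"
    and "is_code f 2 C"
  shows "C = dual f 2 C \<longleftrightarrow>
    ((\<exists>g2. is_CGM f 2 C [[1, g2]] \<and> (g2 ^ 2) mod f = (-1) mod f) \<or>
     (\<exists>g1 g2 g3. is_CGM f 2 C [[g1, g2], [0, g3]] \<and>
        g1 \<noteq> 0 \<and> g3 \<noteq> 0 \<and> lead_coeff g1 = 1 \<and> lead_coeff g3 = 1 \<and>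
        g1 dvd f \<and> g3 dvd f \<and> g3 dvd (f div g1) * g2 \<and>
        (g2 = 0 \<or> degree g2 < degree g3) \<and>
        (\<exists>g' f' r. g' ^ 2 = r * f' - 1 \<and> f = g1 ^ 2 * f' \<and> g3 = g1 * f' \<and> g2 = g1 * g')))"
proof -
  have "C = dual f 2 C \<longleftrightarrow> single_row_self_dual_CGM f C \<or> two_row_self_dual_CGM f C"
  proof
    assume "C = dual f 2 C"
    then interpret self_dual_code2 f C
      using assms by unfold_locales (simp_all add: code2_def)
    show "single_row_self_dual_CGM f C \<or> two_row_self_dual_CGM f C"
      by (rule self_dual_CGM_form)
  next
    assume "single_row_self_dual_CGM f C \<or> two_row_self_dual_CGM f C"
    then show "C = dual f 2 C"
      using single_row_CGM_self_dual[OF assms(2)] two_row_CGM_self_dual by blast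
  qed
  then show ?thesis
    unfolding single_row_self_dual_CGM_def two_row_self_dual_CGM_def .
qed

end
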